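(* Let $\lambda\in\mathbb{C}^*$ and $\alpha_1,\alpha_2,\beta_1,\beta_2\in\mathbb{C}$ with $(\alpha_1,\beta_1)\neq(0,0)$ and $(\alpha_2,\beta_2)\neq(0,0)$. Consider the tensor product $\mathcal{L}$-module $\Omega(\lambda,\alpha_1,\beta_1)\otimes\Omega(\lambda,\alpha_2,\beta_2)$ (both factors being $\mathbb{C}[Y]$), and let $U=\mathrm{span}\{\sum_{t=0}^{j}\binom{j}{t}Y^{j-t}\otimes Y^t\mid j\in\mathbb{N}\}$. Then $U$ is a nonzero proper $\mathcal{L}$-submodule of $\Omega(\lambda,\alpha_1,\beta_1)\otimes\Omega(\lambda,\alpha_2,\beta_2)$; consequently $\Omega(\lambda,\alpha_1,\beta_1)\otimes\Omega(\lambda,\alpha_2,\beta_2)$ is a reducible $\mathcal{L}$-module.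
   Context: The (centerless) Heisenberg-Virasoro algebra $\mathcal{L}$ is the complex Lie algebra with basis $\{L_m,H_m\mid m\in\mathbb{Z}\}$ and brackets $[L_m,L_n]=(n-m)L_{m+n}$, $[L_m,H_n]=nH_{m+n}$, $[H_m,H_n]=0$. For $\lambda\in\mathbb{C}^*$ and $\alpha,\beta\in\mathbb{C}$, $\Omega(\lambda,\alpha,\beta)$ denotes the $\mathcal{L}$-module $\mathbb{C}[Y]$ with $L_m f(Y)=\lambda^m(Y+m\alpha)f(Y-m)$ and $H_m f(Y)=\beta\lambda^m f(Y-m)$ for $m\in\mathbb{Z}$. The tensor product has action $x(v\otimes w)=xv\otimes w+v\otimes xw$. $\mathbb{N}$ denotes non-negative integers. *)

theory Defs
  imports Complex_Main "HOL-Computational_Algebra.Polynomial"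
begin

text \<open>Basis elements of the Heisenberg-Virasoro algebra: L m and H m, m an integer.\<close>
datatype hv_basis = Lg int | Hg int

fun omega_act :: "complex \<Rightarrow> complex \<Rightarrow> complex \<Rightarrow> hv_basis \<Rightarrow> complex poly \<Rightarrow> complex poly" where
  "omega_act lam al be (Lg m) f =
     smult (lam powi m) ([:of_int m * al, 1:] * pcompose f [:- of_int m, 1:])"
| "omega_act lam al be (Hg m) f =
     smult (be * lam powi m) (pcompose f [:- of_int m, 1:])"

text \<open>Model of C[Y] (x) C[Y]: the polynomial ring (C[Y])[Z], where
  f (x) g corresponds to f(Y) g(Z); a general element F equals
  sum over b of (coeff F b) (x) Y^b.\<close>
type_synonym tensor = "complex poly poly"

definition tens :: "complex poly \<Rightarrow> complex poly \<Rightarrow> tensor" where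
  "tens f g = map_poly (\<lambda>c. smult c f) g"

definition tscale :: "complex \<Rightarrow> tensor \<Rightarrow> tensor" where
  "tscale c F = smult [:c:] F"

definition tensor_act ::
  "(hv_basis \<Rightarrow> complex poly \<Rightarrow> complex poly) \<Rightarrow> (hv_basis \<Rightarrow> complex poly \<Rightarrow> complex poly)
     \<Rightarrow> hv_basis \<Rightarrow> tensor \<Rightarrow> tensor" where
  "tensor_act A1 A2 x F =
     (\<Sum>b\<le>degree F. tens (A1 x (coeff F b)) (monom 1 b) + tens (coeff F b) (A2 x (monom 1 b)))"

definition is_submodule :: "(hv_basis \<Rightarrow> tensor \<Rightarrow> tensor) \<Rightarrow> tensor set \<Rightarrow> bool" where
  "is_submodule act W \<longleftrightarrow> module.subspace tscale W \<and> (\<forall>x. \<forall>w\<in>W. act x w \<in> W)"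

definition reducible :: "(hv_basis \<Rightarrow> tensor \<Rightarrow> tensor) \<Rightarrow> bool" where
  "reducible act \<longleftrightarrow> (\<exists>W. is_submodule act W \<and> W \<noteq> {0} \<and> W \<noteq> UNIV)"

end

theory Submission
  imports Defs
begin

text \<open>Read an element of \<open>\<complex>[Y] \<otimes> \<complex>[Y]\<close> as a polynomial function of two variables \<open>(y, z)\<close>.
  The binomial tensors then become \<open>(y + z)\<^sup>j\<close>, so \<open>U\<close> is the space of polynomial functions
  of \<open>y + z\<close>. Both \<open>L\<^sub>m\<close> and \<open>H\<^sub>m\<close> act on each factor by a shift by \<open>m\<close> followed by
  multiplication with a function of that factor's variable; on a function \<open>P(y + z)\<close> the two
  shifted terms share the factor \<open>P(y + z - m)\<close> and their multipliers add up to
  \<open>\<lambda>\<^sup>m (y + z + m(\<alpha>\<^sub>1 + \<alpha>\<^sub>2))\<close> resp. \<open>\<lambda>\<^sup>m (\<beta>\<^sub>1 + \<beta>\<^sub>2)\<close>, again functions of \<open>y + z\<close>.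
  The tensor \<open>Y \<otimes> 1\<close>, i.e. the function \<open>y\<close>, is not of this form, so \<open>U\<close> is proper.\<close>

lemma module_tscale: "module tscale"
  by unfold_locales (auto simp: tscale_def smult_add_right smult_add_left mult.commute
      simp flip: smult_add_left[of "[:a:]" "[:b:]" for a b] one_pCons)

definition tensor_eval :: "tensor \<Rightarrow> complex \<Rightarrow> complex \<Rightarrow> complex" where
  "tensor_eval F y z = poly (poly F [:z:]) y"

lemma tensor_eval_0 [simp]: "tensor_eval 0 y z = 0"
  by (simp add: tensor_eval_def)

lemma tensor_eval_add [simp]: "tensor_eval (F + G) y z = tensor_eval F y z + tensor_eval G y z"
  by (simp add: tensor_eval_def)

lemma tensor_eval_sum [simp]: "tensor_eval (sum f A) y z = (\<Sum>a\<in>A. tensor_eval (f a) y z)"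
  by (induction A rule: infinite_finite_induct) auto

lemma tensor_eval_tscale [simp]: "tensor_eval (tscale c F) y z = c * tensor_eval F y z"
  by (simp add: tensor_eval_def tscale_def)

lemma tensor_eval_tens [simp]: "tensor_eval (tens f g) y z = poly f y * poly g z"
proof -
  have "poly (tens f g) [:z:] = smult (poly g z) f"
    unfolding tens_def by (induction g) (auto simp: map_poly_pCons smult_add_left mult.commute)
  then show ?thesis by (simp add: tensor_eval_def)
qed

lemma tensor_eval_altdef: "tensor_eval F y z = (\<Sum>b\<le>degree F. poly (coeff F b) y * z ^ b)"
proof -
  have "poly F [:z:] = (\<Sum>b\<le>degree F. coeff F b * [:z:] ^ b)" by (rule poly_altdef)
  then show ?thesis by (simp add: tensor_eval_def poly_sum)
qed

lemma tensor_eqI: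
  assumes "\<And>y z. tensor_eval F y z = tensor_eval G y z"
  shows "F = G"
proof -
  have "poly (F - G) [:z:] = 0" for z
  proof -
    have "poly (poly (F - G) [:z:]) y = 0" for y
      using assms[of y z] by (simp add: tensor_eval_def)
    then show ?thesis using poly_all_0_iff_0 by blast
  qed
  then have "range (\<lambda>z. [:z:]) \<subseteq> {p. poly (F - G) p = 0}"
    by auto
  moreover have "infinite (range (\<lambda>z::complex. [:z:]))"
    using finite_imageD[of "\<lambda>z::complex. [:z:]" UNIV] infinite_UNIV_char_0
    by (auto simp: inj_on_def)
  ultimately have "F - G = 0"
    using finite_subset poly_roots_finite by blast
  then show ?thesis by simp
qed

lemma tensor_eval_tensor_act_shift:
  assumes "\<And>f y. poly (A1 x f) y = c1 y * poly f (y - s)"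
    and "\<And>g z. poly (A2 x g) z = c2 z * poly g (z - s)"
  shows "tensor_eval (tensor_act A1 A2 x F) y z
           = c1 y * tensor_eval F (y - s) z + c2 z * tensor_eval F y (z - s)"
  unfolding tensor_act_def tensor_eval_altdef[of F]
  by (simp add: assms poly_monom sum_distrib_left sum.distrib algebra_simps)

lemma poly_omega_act_Lg:
  "poly (omega_act lam al be (Lg m) f) y = lam powi m * (y + of_int m * al) * poly f (y - of_int m)"
  by (simp add: poly_pcompose algebra_simps)

lemma poly_omega_act_Hg:
  "poly (omega_act lam al be (Hg m) f) y = be * lam powi m * poly f (y - of_int m)"
  by (simp add: poly_pcompose)

definition depends_on_sum :: "tensor \<Rightarrow> bool" where
  "depends_on_sum F \<longleftrightarrow> (\<exists>P. \<forall>y z. tensor_eval F y z = poly P (y + z))"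

lemma subspace_depends_on_sum: "module.subspace tscale {F. depends_on_sum F}"
proof -
  have "depends_on_sum (F + G)" if "depends_on_sum F" "depends_on_sum G" for F G
    using that unfolding depends_on_sum_def by (metis poly_add tensor_eval_add)
  moreover have "depends_on_sum (tscale c F)" if "depends_on_sum F" for c F
    using that unfolding depends_on_sum_def by (metis poly_smult tensor_eval_tscale)
  moreover have "depends_on_sum 0"
    unfolding depends_on_sum_def by (metis poly_0 tensor_eval_0)
  ultimately show ?thesis
    by (simp add: module.subspace_def[OF module_tscale])
qed

lemma depends_on_sum_tensor_act:
  assumes "depends_on_sum F"
  shows "depends_on_sum (tensor_act (omega_act lam al1 be1) (omega_act lam al2 be2) x F)"
proof -
  obtain P where P: "\<And>y z. tensor_eval F y z = poly P (y + z)"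
    using assms depends_on_sum_def by blast
  let ?shift = "\<lambda>m. pcompose P [:- of_int m, 1:]"
  show ?thesis
  proof (cases x)
    case (Lg m)
    have "tensor_eval (tensor_act (omega_act lam al1 be1) (omega_act lam al2 be2) x F) y z
          = lam powi m * (y + of_int m * al1) * tensor_eval F (y - of_int m) z
            + lam powi m * (z + of_int m * al2) * tensor_eval F y (z - of_int m)" for y z
      unfolding Lg by (rule tensor_eval_tensor_act_shift; rule poly_omega_act_Lg)
    then have "tensor_eval (tensor_act (omega_act lam al1 be1) (omega_act lam al2 be2) x F) y z
          = poly (smult (lam powi m) ([:of_int m * (al1 + al2), 1:] * ?shift m)) (y + z)" for y z
      by (simp add: P poly_pcompose algebra_simps)
    then show ?thesis unfolding depends_on_sum_def by blast
  next
    case (Hg m)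
    have "tensor_eval (tensor_act (omega_act lam al1 be1) (omega_act lam al2 be2) x F) y z
          = be1 * lam powi m * tensor_eval F (y - of_int m) z
            + be2 * lam powi m * tensor_eval F y (z - of_int m)" for y z
      unfolding Hg by (rule tensor_eval_tensor_act_shift; rule poly_omega_act_Hg)
    then have "tensor_eval (tensor_act (omega_act lam al1 be1) (omega_act lam al2 be2) x F) y z
          = poly (smult (lam powi m * (be1 + be2)) (?shift m)) (y + z)" for y z
      by (simp add: P poly_pcompose algebra_simps)
    then show ?thesis unfolding depends_on_sum_def by blast
  qed
qed

definition binomial_tensor :: "nat \<Rightarrow> tensor" where
  "binomial_tensor j = (\<Sum>t\<le>j. tscale (of_nat (j choose t)) (tens (monom 1 (j - t)) (monom 1 t)))"

lemma tensor_eval_binomial_tensor: "tensor_eval (binomial_tensor j) y z = (y + z) ^ j"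
proof -
  have "(y + z) ^ j = (z + y) ^ j" by (simp add: add.commute)
  also have "\<dots> = (\<Sum>t\<le>j. of_nat (j choose t) * z ^ t * y ^ (j - t))" by (rule binomial_ring)
  finally show ?thesis
    by (simp add: binomial_tensor_def poly_monom mult_ac)
qed

lemma depends_on_sum_binomial_tensor: "depends_on_sum (binomial_tensor j)"
  unfolding depends_on_sum_def
  by (intro exI[of _ "monom 1 j"]) (simp add: tensor_eval_binomial_tensor poly_monom)

lemma span_binomial_tensor: "module.span tscale (range binomial_tensor) = {F. depends_on_sum F}"
proof -
  interpret module tscale by (rule module_tscale)
  have "range binomial_tensor \<subseteq> {F. depends_on_sum F}"
    using depends_on_sum_binomial_tensor by blast
  then have "span (range binomial_tensor) \<subseteq> {F. depends_on_sum F}"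
    using span_minimal subspace_depends_on_sum by blast
  moreover have "F \<in> span (range binomial_tensor)" if "depends_on_sum F" for F
  proof -
    obtain P where P: "\<And>y z. tensor_eval F y z = poly P (y + z)"
      using \<open>depends_on_sum F\<close> depends_on_sum_def by blast
    have "F = (\<Sum>j\<le>degree P. tscale (coeff P j) (binomial_tensor j))"
      by (rule tensor_eqI) (simp add: P tensor_eval_binomial_tensor poly_altdef)
    also have "\<dots> \<in> span (range binomial_tensor)"
      by (intro span_sum span_scale span_base) simp
    finally show ?thesis .
  qed
  ultimately show ?thesis by blast
qed

lemma not_depends_on_sum_Y_tens_1: "\<not> depends_on_sum (tens [:0, 1:] 1)"
proof
  assume "depends_on_sum (tens [:0, 1:] 1)"
  then obtain P where "\<And>y z. tensor_eval (tens [:0, 1:] 1) y z = poly P (y + z)"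
    using depends_on_sum_def by blast
  from this[of 1 0] this[of 0 1] show False by simp
qed

theorem mainTheorem15:
  fixes lam al1 al2 be1 be2 :: complex
  assumes "lam \<noteq> 0"
    and "(al1, be1) \<noteq> (0, 0)"
    and "(al2, be2) \<noteq> (0, 0)"
  defines "act \<equiv> tensor_act (omega_act lam al1 be1) (omega_act lam al2 be2)"
    and "U \<equiv> module.span tscale
               (range (\<lambda>j::nat. \<Sum>t\<le>j. tscale (of_nat (j choose t))
                                         (tens (monom 1 (j - t)) (monom 1 t))))"
  shows "is_submodule act U \<and> U \<noteq> {0} \<and> U \<noteq> UNIV \<and> reducible act"
proof -
  have U: "U = {F. depends_on_sum F}"
    unfolding U_def span_binomial_tensor[symmetric] binomial_tensor_def by simp
  have "is_submodule act U"
    unfolding is_submodule_def act_def U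
    using subspace_depends_on_sum depends_on_sum_tensor_act by blast
  moreover have "U \<noteq> {0}"
  proof -
    have "binomial_tensor 0 \<noteq> 0"
      using tensor_eval_binomial_tensor[of 0 0 0] by force
    then show ?thesis
      using U depends_on_sum_binomial_tensor by blast
  qed
  moreover have "U \<noteq> UNIV"
    using U not_depends_on_sum_Y_tens_1 by auto
  ultimately show ?thesis
    unfolding reducible_def by blast
qed

end
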